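(* Let $R$ be a monad on Sets, $LM$ a left $R$-module with values in Sets, and $CC$ a C-subsystem of $CC(R,LM)$, with $C=Ob(CC)$ and $\widetilde C=\widetilde{Ob}(CC)$. Let $(E_1,\dots,E_m),(T_1,\dots,T_n)\in C$ with $n\ge1$ and $(f_1,\dots,f_n)\in R([m])^n$. Then $(f_1,\dots,f_n)\in\mathrm{Hom}_{CC}((E_1,\dots,E_m),(T_1,\dots,T_n))$ if and only if $(f_1,\dots,f_{n-1})\in\mathrm{Hom}_{CC}((E_1,\dots,E_m),(T_1,\dots,T_{n-1}))$ and $(E_1,\dots,E_m,\,T_n(f_1/1,\dots,f_{n-1}/n-1),\,f_n)\in\widetilde C$.
   Context: Notation: $[n]=\{1,\dots,n\}$. $R$ is a monad on Sets (unit $\eta$, Kleisli extension $\mathrm{bind}$, satisfying the monad laws), $LM$ a left $R$-module (maps $\rho(f):LM(X)\to LM(Y)$ for $f:X\to R(Y)$ with $\rho(\eta_X)=\mathrm{id}$, $\rho(g)\circ\rho(f)=\rho(\mathrm{bind}(g)\circ f)$). Elements of $Y$ are regarded in $R(Y)$ via $\eta_Y$; $E(f_1/1,\dots,f_k/k)$ denotes $\rho(f)(E)$ or $\mathrm{bind}(f)(E)$ with $f(i)=f_i$. $CC(R,LM)$: objects $(T_1,\dots,T_n)$ with $T_i\in LM([i-1])$, $l=n$, $ft$ drops the last entry, $pt=()$; morphisms $(E_1,\dots,E_m)\to(T_1,\dots,T_n)$ are elements of $R([m])^n$, the composite of $f=(f_1,\dots,f_n)$ followed by $g=(g_1,\dots,g_k)$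 is $(g_j(f_1/1,\dots,f_n/n))_j$, identities $(1,\dots,n)$; $p_X=(1,\dots,n):(T_1,\dots,T_{n+1})\to(T_1,\dots,T_n)$; for $X=(T_1,\dots,T_{n+1})$ and $f=(f_1,\dots,f_n):(R_1,\dots,R_m)\to ft(X)$, $f^*X=(R_1,\dots,R_m,T_{n+1}(f_1/1,\dots,f_n/n))$, $q(f,X)=(f_1,\dots,f_n,m+1)$. A C-subsystem is a subcategory $CC$ containing $pt$, such that for every object $X$ of $CC$ with $l(X)>0$: $ft(X),p_X\in CC$; for $f:Y\to ft(X)$ in $CC$, $f^*X,q(f,X)\in CC$; for $f:Y\to X$ in $CC$, the morphism $s_f:Y\to(p_X\circ f)^*X$ with $p\circ s_f=\mathrm{id}$ and $q(p_X\circ f,X)\circ s_f=f$ is in $CC$. $\widetilde{Ob}(CC)$ is the set of morphisms $s:ft(X)\to X$ of $CC$ with $l(X)>0$ and $p_X\circ s=\mathrm{id}$; the section $(1,\dots,k,t):(A_1,\dots,A_k)\to(A_1,\dots,A_k,A)$ is identified with $(A_1,\dots,A_k,A,t)$. *)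

theory Defs
  imports Main
begin

text \<open>
  The finite set [n] = {1..n} is represented by the natural numbers 1..n.
  The monad R is given through its values on the finite sets [n] (the only ones the
  C-system CC(R,LM) uses): Rs n is the set R([n]) (elements of type 'r),
  eta n i is the unit eta_[n](i), and bind m k f t is the Kleisli extension of
  f : [m] -> R([k]) applied to t in R([m]).  Likewise LMs n = LM([n]) and
  rho m k f E = rho(f)(E) for f : [m] -> R([k]).  Functions [m] -> X are HOL functions
  nat => X, of which only the values on {1..m} matter (congruence axioms below).
\<close>

definition rmonad ::
  "(nat \<Rightarrow> 'r set) \<Rightarrow> (nat \<Rightarrow> nat \<Rightarrow> 'r) \<Rightarrow> (nat \<Rightarrow> nat \<Rightarrow> (nat \<Rightarrow> 'r) \<Rightarrow> 'r \<Rightarrow> 'r) \<Rightarrow> bool"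
where
  "rmonad Rs eta bind \<longleftrightarrow>
     (\<forall>n i. i \<in> {1..n} \<longrightarrow> eta n i \<in> Rs n) \<and>
     (\<forall>m k f t. (\<forall>i\<in>{1..m}. f i \<in> Rs k) \<longrightarrow> t \<in> Rs m \<longrightarrow> bind m k f t \<in> Rs k) \<and>
     (\<forall>m k f g t. (\<forall>i\<in>{1..m}. f i = g i) \<longrightarrow> t \<in> Rs m \<longrightarrow> bind m k f t = bind m k g t) \<and>
     (\<forall>n t. t \<in> Rs n \<longrightarrow> bind n n (eta n) t = t) \<and>
     (\<forall>m k f i. (\<forall>j\<in>{1..m}. f j \<in> Rs k) \<longrightarrow> i \<in> {1..m} \<longrightarrow> bind m k f (eta m i) = f i) \<and>
     (\<forall>m k l f g t. (\<forall>i\<in>{1..m}. f i \<in> Rs k) \<longrightarrow> (\<forall>j\<in>{1..k}. g j \<in> Rs l) \<longrightarrow> t \<in> Rs m \<longrightarrow>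
        bind k l g (bind m k f t) = bind m l (\<lambda>i. bind k l g (f i)) t)"

definition lmodule ::
  "(nat \<Rightarrow> 'r set) \<Rightarrow> (nat \<Rightarrow> nat \<Rightarrow> 'r) \<Rightarrow> (nat \<Rightarrow> nat \<Rightarrow> (nat \<Rightarrow> 'r) \<Rightarrow> 'r \<Rightarrow> 'r)
   \<Rightarrow> (nat \<Rightarrow> 'l set) \<Rightarrow> (nat \<Rightarrow> nat \<Rightarrow> (nat \<Rightarrow> 'r) \<Rightarrow> 'l \<Rightarrow> 'l) \<Rightarrow> bool"
where
  "lmodule Rs eta bind LMs rho \<longleftrightarrow>
     (\<forall>m k f E. (\<forall>i\<in>{1..m}. f i \<in> Rs k) \<longrightarrow> E \<in> LMs m \<longrightarrow> rho m k f E \<in> LMs k) \<and>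
     (\<forall>m k f g E. (\<forall>i\<in>{1..m}. f i = g i) \<longrightarrow> E \<in> LMs m \<longrightarrow> rho m k f E = rho m k g E) \<and>
     (\<forall>n E. E \<in> LMs n \<longrightarrow> rho n n (eta n) E = E) \<and>
     (\<forall>m k l f g E. (\<forall>i\<in>{1..m}. f i \<in> Rs k) \<longrightarrow> (\<forall>j\<in>{1..k}. g j \<in> Rs l) \<longrightarrow> E \<in> LMs m \<longrightarrow>
        rho k l g (rho m k f E) = rho m l (\<lambda>i. bind k l g (f i)) E)"

text \<open>The C-system CC(R,LM).  Objects are lists (T_1,...,T_n) with T_i in LM([i-1]).
  A morphism is a triple (domain, codomain, (f_1,...,f_n)).\<close>

type_synonym ('l, 'r) ccmor = "'l list \<times> 'l list \<times> 'r list"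

definition ccob :: "(nat \<Rightarrow> 'l set) \<Rightarrow> 'l list \<Rightarrow> bool" where
  "ccob LMs X \<longleftrightarrow> (\<forall>i<length X. X ! i \<in> LMs i)"

definition ccmor :: "(nat \<Rightarrow> 'r set) \<Rightarrow> (nat \<Rightarrow> 'l set) \<Rightarrow> ('l, 'r) ccmor \<Rightarrow> bool" where
  "ccmor Rs LMs F \<longleftrightarrow> (case F of (Y, X, f) \<Rightarrow>
     ccob LMs Y \<and> ccob LMs X \<and> length f = length X \<and> (\<forall>j<length f. f ! j \<in> Rs (length Y)))"

definition lfun :: "'r list \<Rightarrow> nat \<Rightarrow> 'r" where
  "lfun f i = f ! (i - 1)"

definition cc_dom :: "('l, 'r) ccmor \<Rightarrow> 'l list" where "cc_dom F = fst F"
definition cc_cod :: "('l, 'r) ccmor \<Rightarrow> 'l list" where "cc_cod F = fst (snd F)"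

text \<open>Composite of F : Y -> X followed by G : X -> Z.\<close>
definition cc_comp ::
  "(nat \<Rightarrow> nat \<Rightarrow> (nat \<Rightarrow> 'r) \<Rightarrow> 'r \<Rightarrow> 'r) \<Rightarrow> ('l, 'r) ccmor \<Rightarrow> ('l, 'r) ccmor \<Rightarrow> ('l, 'r) ccmor"
where
  "cc_comp bind F G = (case F of (Y, X, f) \<Rightarrow> case G of (_, Z, g) \<Rightarrow>
     (Y, Z, map (bind (length X) (length Y) (lfun f)) g))"

definition cc_id :: "(nat \<Rightarrow> nat \<Rightarrow> 'r) \<Rightarrow> 'l list \<Rightarrow> ('l, 'r) ccmor" where
  "cc_id eta X = (X, X, map (eta (length X)) [1..<length X + 1])"

definition cc_ft :: "'l list \<Rightarrow> 'l list" where "cc_ft X = butlast X"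

definition cc_p :: "(nat \<Rightarrow> nat \<Rightarrow> 'r) \<Rightarrow> 'l list \<Rightarrow> ('l, 'r) ccmor" where
  "cc_p eta X = (X, butlast X, map (eta (length X)) [1..<length X])"

definition cc_pb ::
  "(nat \<Rightarrow> nat \<Rightarrow> (nat \<Rightarrow> 'r) \<Rightarrow> 'l \<Rightarrow> 'l) \<Rightarrow> ('l, 'r) ccmor \<Rightarrow> 'l list \<Rightarrow> 'l list"
where
  "cc_pb rho F X = (case F of (Y, _, f) \<Rightarrow>
     Y @ [rho (length X - 1) (length Y) (lfun f) (last X)])"

text \<open>q(f,X) = (f_1,...,f_n,m+1) : f^*X -> X, the f_i in R([m]) being regarded in
  R([m+1]) along the inclusion [m] \<subseteq> [m+1] (i.e. via R applied to it).\<close>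
definition cc_q ::
  "(nat \<Rightarrow> nat \<Rightarrow> 'r) \<Rightarrow> (nat \<Rightarrow> nat \<Rightarrow> (nat \<Rightarrow> 'r) \<Rightarrow> 'r \<Rightarrow> 'r) \<Rightarrow> (nat \<Rightarrow> nat \<Rightarrow> (nat \<Rightarrow> 'r) \<Rightarrow> 'l \<Rightarrow> 'l)
   \<Rightarrow> ('l, 'r) ccmor \<Rightarrow> 'l list \<Rightarrow> ('l, 'r) ccmor"
where
  "cc_q eta bind rho F X = (case F of (Y, _, f) \<Rightarrow>
     (cc_pb rho F X, X,
      map (bind (length Y) (length Y + 1) (eta (length Y + 1))) f @ [eta (length Y + 1) (length Y + 1)]))"

text \<open>s_f : Y -> (p_X o f)^*X for F = (Y, X, f); in CC(R,LM) it is (1,...,m,f_n),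
  the unique morphism with p o s_f = id and q(p_X o f, X) o s_f = f.\<close>
definition cc_s ::
  "(nat \<Rightarrow> nat \<Rightarrow> 'r) \<Rightarrow> (nat \<Rightarrow> nat \<Rightarrow> (nat \<Rightarrow> 'r) \<Rightarrow> 'r \<Rightarrow> 'r) \<Rightarrow> (nat \<Rightarrow> nat \<Rightarrow> (nat \<Rightarrow> 'r) \<Rightarrow> 'l \<Rightarrow> 'l)
   \<Rightarrow> ('l, 'r) ccmor \<Rightarrow> ('l, 'r) ccmor"
where
  "cc_s eta bind rho F = (case F of (Y, X, f) \<Rightarrow>
     (Y, cc_pb rho (cc_comp bind F (cc_p eta X)) X,
      map (eta (length Y)) [1..<length Y + 1] @ [last f]))"

definition csubsystem ::
  "(nat \<Rightarrow> 'r set) \<Rightarrow> (nat \<Rightarrow> nat \<Rightarrow> 'r) \<Rightarrow> (nat \<Rightarrow> nat \<Rightarrow> (nat \<Rightarrow> 'r) \<Rightarrow> 'r \<Rightarrow> 'r)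
   \<Rightarrow> (nat \<Rightarrow> 'l set) \<Rightarrow> (nat \<Rightarrow> nat \<Rightarrow> (nat \<Rightarrow> 'r) \<Rightarrow> 'l \<Rightarrow> 'l)
   \<Rightarrow> 'l list set \<Rightarrow> ('l, 'r) ccmor set \<Rightarrow> bool"
where
  "csubsystem Rs eta bind LMs rho Ob Mor \<longleftrightarrow>
     \<comment> \<open>subcategory\<close>
     (\<forall>X\<in>Ob. ccob LMs X) \<and>
     (\<forall>F\<in>Mor. ccmor Rs LMs F \<and> cc_dom F \<in> Ob \<and> cc_cod F \<in> Ob) \<and>
     (\<forall>X\<in>Ob. cc_id eta X \<in> Mor) \<and>
     (\<forall>F\<in>Mor. \<forall>G\<in>Mor. cc_cod F = cc_dom G \<longrightarrow> cc_comp bind F G \<in> Mor) \<and>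
     \<comment> \<open>contains pt\<close>
     [] \<in> Ob \<and>
     \<comment> \<open>closure conditions\<close>
     (\<forall>X\<in>Ob. length X > 0 \<longrightarrow>
        cc_ft X \<in> Ob \<and> cc_p eta X \<in> Mor \<and>
        (\<forall>F\<in>Mor. cc_cod F = cc_ft X \<longrightarrow> cc_pb rho F X \<in> Ob \<and> cc_q eta bind rho F X \<in> Mor) \<and>
        (\<forall>F\<in>Mor. cc_cod F = X \<longrightarrow> cc_s eta bind rho F \<in> Mor))"

definition cc_Hom :: "('l, 'r) ccmor set \<Rightarrow> 'l list \<Rightarrow> 'l list \<Rightarrow> 'r list set" where
  "cc_Hom Mor Y X = {f. (Y, X, f) \<in> Mor}"

definition cc_Obtilde ::
  "(nat \<Rightarrow> nat \<Rightarrow> 'r) \<Rightarrow> (nat \<Rightarrow> nat \<Rightarrow> (nat \<Rightarrow> 'r) \<Rightarrow> 'r \<Rightarrow> 'r) \<Rightarrow> ('l, 'r) ccmor set \<Rightarrow> ('l, 'r) ccmor set"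
where
  "cc_Obtilde eta bind Mor = {S \<in> Mor. length (cc_cod S) > 0 \<and> cc_dom S = cc_ft (cc_cod S) \<and>
      cc_comp bind S (cc_p eta (cc_cod S)) = cc_id eta (cc_ft (cc_cod S))}"

text \<open>The identification of (A_1,...,A_k,A,t) with the section (1,...,k,t).\<close>
definition tilde_elt :: "(nat \<Rightarrow> nat \<Rightarrow> 'r) \<Rightarrow> 'l list \<Rightarrow> 'l \<Rightarrow> 'r \<Rightarrow> ('l, 'r) ccmor" where
  "tilde_elt eta As A t = (As, As @ [A], map (eta (length As)) [1..<length As + 1] @ [t])"

end

theory Submission
  imports Defs
begin

text \<open>
  If f : E \<rightarrow> T lies in CC, then so do f \<circ> p_T = (f_1,\<dots>,f_{n-1}) and the section s_f,
  which in CC(R,LM) is exactly (E, T_n(f_1/1,\<dots>,f_{n-1}/n-1), f_n).  Conversely f is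
  recovered as the composite of that section with q((f_1,\<dots>,f_{n-1}), T), both of which
  lie in CC; the only computation needed is that weakening along [m] \<subseteq> [m+1] followed by
  the substitution (1,\<dots>,m,f_n) is the identity on R([m]).
\<close>

lemma rmonad_eta_in:
  "rmonad Rs eta bind \<Longrightarrow> i \<in> {1..n} \<Longrightarrow> eta n i \<in> Rs n"
  unfolding rmonad_def by (elim conjE) blast

lemma rmonad_bind_eta:
  "rmonad Rs eta bind \<Longrightarrow> \<forall>j\<in>{1..m}. f j \<in> Rs k \<Longrightarrow> i \<in> {1..m} \<Longrightarrow> bind m k f (eta m i) = f i"
  unfolding rmonad_def by blast

lemma rmonad_bind_cong:
  "rmonad Rs eta bind \<Longrightarrow> \<forall>i\<in>{1..m}. f i = g i \<Longrightarrow> t \<in> Rs m \<Longrightarrow> bind m k f t = bind m k g t"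
  unfolding rmonad_def by blast

lemma rmonad_bind_eta_right:
  "rmonad Rs eta bind \<Longrightarrow> t \<in> Rs n \<Longrightarrow> bind n n (eta n) t = t"
  unfolding rmonad_def by blast

lemma rmonad_bind_assoc:
  "rmonad Rs eta bind \<Longrightarrow> \<forall>i\<in>{1..m}. f i \<in> Rs k \<Longrightarrow> \<forall>j\<in>{1..k}. g j \<in> Rs l \<Longrightarrow> t \<in> Rs m \<Longrightarrow>
     bind k l g (bind m k f t) = bind m l (\<lambda>i. bind k l g (f i)) t"
  unfolding rmonad_def by blast

lemma rmonad_bind_weaken_retract:
  assumes "rmonad Rs eta bind" and "t \<in> Rs m"
    and "\<forall>i\<in>{1..m + 1}. h i \<in> Rs m" and "\<forall>i\<in>{1..m}. h i = eta m i"
  shows "bind (m + 1) m h (bind m (m + 1) (eta (m + 1)) t) = t"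
proof -
  have eta_in: "\<forall>i\<in>{1..m}. eta (m + 1) i \<in> Rs (m + 1)"
    using rmonad_eta_in[OF assms(1)] by simp
  have "bind (m + 1) m h (bind m (m + 1) (eta (m + 1)) t)
      = bind m m (\<lambda>i. bind (m + 1) m h (eta (m + 1) i)) t"
    using rmonad_bind_assoc[OF assms(1) eta_in assms(3,2)] .
  also have "\<dots> = bind m m (eta m) t"
    using assms(2,4) rmonad_bind_eta[OF assms(1,3)] by (intro rmonad_bind_cong[OF assms(1)]) auto
  also have "\<dots> = t"
    using rmonad_bind_eta_right[OF assms(1,2)] .
  finally show ?thesis .
qed

lemma map_lfun_upt_butlast:
  "map (lfun f) [1..<length f] = butlast f"
  by (rule nth_equalityI) (auto simp: lfun_def nth_butlast)

lemma lfun_append_upt: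
  "i \<in> {1..m} \<Longrightarrow> lfun (map g [1..<m + 1] @ [t]) i = g i"
  by (auto simp: lfun_def nth_append simp del: upt_Suc)

lemma lfun_append_upt_last:
  "lfun (map g [1..<m + 1] @ [t]) (m + 1) = t"
  by (simp add: lfun_def nth_append del: upt_Suc)

lemma lfun_tilde_mor_in:
  assumes "rmonad Rs eta bind" and "t \<in> Rs m"
  shows "\<forall>i\<in>{1..m + 1}. lfun (map (eta m) [1..<m + 1] @ [t]) i \<in> Rs m"
proof
  fix i assume i: "i \<in> {1..m + 1}"
  show "lfun (map (eta m) [1..<m + 1] @ [t]) i \<in> Rs m"
  proof (cases "i = m + 1")
    case True
    then show ?thesis using lfun_append_upt_last[of "eta m" m t] assms(2) by simp
  next
    case False
    then have "i \<in> {1..m}" using i by auto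
    then show ?thesis using lfun_append_upt[of i m "eta m" t] rmonad_eta_in[OF assms(1)] by simp
  qed
qed

lemma cc_comp_cc_p:
  assumes "rmonad Rs eta bind" and "length f = length X"
    and "\<forall>j<length f. f ! j \<in> Rs (length Y)"
  shows "cc_comp bind (Y, X, f) (cc_p eta X) = (Y, butlast X, butlast f)"
proof -
  have f_in: "\<forall>j\<in>{1..length X}. lfun f j \<in> Rs (length Y)"
    using assms(2,3) by (auto simp: lfun_def)
  have "map (bind (length X) (length Y) (lfun f)) (map (eta (length X)) [1..<length X])
      = map (lfun f) [1..<length f]"
    using assms(2) rmonad_bind_eta[OF assms(1) f_in] by auto
  also have "\<dots> = butlast f"
    by (rule map_lfun_upt_butlast)
  finally show ?thesis
    unfolding cc_comp_def cc_p_def by (simp only: prod.case)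
qed

lemma cc_s_eq_tilde_elt:
  assumes "rmonad Rs eta bind" and "length f = length X"
    and "\<forall>j<length f. f ! j \<in> Rs (length Y)"
  shows "cc_s eta bind rho (Y, X, f)
    = tilde_elt eta Y (rho (length X - 1) (length Y) (lfun (butlast f)) (last X)) (last f)"
  unfolding cc_s_def tilde_elt_def cc_pb_def by (simp add: cc_comp_cc_p[OF assms] del: upt_Suc)

lemma tilde_elt_comp_cc_p:
  assumes "rmonad Rs eta bind" and "t \<in> Rs (length As)"
  shows "cc_comp bind (tilde_elt eta As A t) (cc_p eta (As @ [A])) = cc_id eta As"
proof -
  let ?m = "length As" and ?s = "map (eta (length As)) [1..<length As + 1] @ [t]"
  have s_eta: "\<forall>i\<in>{1..?m}. lfun ?s i = eta ?m i"
    by (intro ballI lfun_append_upt)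
  have "map (bind (?m + 1) ?m (lfun ?s)) (map (eta (?m + 1)) [1..<?m + 1])
      = map (eta ?m) [1..<?m + 1]"
    using rmonad_bind_eta[OF assms(1) lfun_tilde_mor_in[OF assms]] s_eta by (auto simp del: upt_Suc)
  then show ?thesis
    unfolding cc_comp_def cc_p_def cc_id_def tilde_elt_def by (simp del: upt_Suc)
qed

lemma tilde_elt_in_cc_Obtilde_iff:
  assumes "rmonad Rs eta bind" and "t \<in> Rs (length As)"
  shows "tilde_elt eta As A t \<in> cc_Obtilde eta bind Mor \<longleftrightarrow> tilde_elt eta As A t \<in> Mor"
  using tilde_elt_comp_cc_p[OF assms]
  by (simp add: cc_Obtilde_def cc_cod_def cc_dom_def cc_ft_def tilde_elt_def)

lemma tilde_elt_comp_cc_q: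
  assumes "rmonad Rs eta bind" and "\<forall>x\<in>set g. x \<in> Rs (length Y)" and "t \<in> Rs (length Y)"
  shows "cc_comp bind (tilde_elt eta Y A t) (cc_q eta bind rho (Y, W, g) X) = (Y, X, g @ [t])"
proof -
  let ?m = "length Y" and ?s = "map (eta (length Y)) [1..<length Y + 1] @ [t]"
  note s_in = lfun_tilde_mor_in[OF assms(1,3)]
  have s_eta: "\<forall>i\<in>{1..?m}. lfun ?s i = eta ?m i"
    by (intro ballI lfun_append_upt)
  have "bind (?m + 1) ?m (lfun ?s) (bind ?m (?m + 1) (eta (?m + 1)) x) = x" if "x \<in> Rs ?m" for x
    using rmonad_bind_weaken_retract[OF assms(1) that s_in s_eta] .
  moreover have "bind (?m + 1) ?m (lfun ?s) (eta (?m + 1) (?m + 1)) = t"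
    using rmonad_bind_eta[OF assms(1) s_in, of "?m + 1"] lfun_append_upt_last[of "eta ?m" ?m t]
    by simp
  ultimately show ?thesis
    using assms(2) unfolding cc_comp_def cc_q_def tilde_elt_def by (simp add: map_idI del: upt_Suc)
qed

lemma csubsystem_comp_closed:
  "csubsystem Rs eta bind LMs rho Ob Mor \<Longrightarrow> F \<in> Mor \<Longrightarrow> G \<in> Mor \<Longrightarrow> cc_cod F = cc_dom G \<Longrightarrow>
     cc_comp bind F G \<in> Mor"
  unfolding csubsystem_def by blast

lemma csubsystem_p_closed:
  "csubsystem Rs eta bind LMs rho Ob Mor \<Longrightarrow> X \<in> Ob \<Longrightarrow> X \<noteq> [] \<Longrightarrow> cc_p eta X \<in> Mor"
  unfolding csubsystem_def by blast

lemma csubsystem_q_closed: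
  "csubsystem Rs eta bind LMs rho Ob Mor \<Longrightarrow> X \<in> Ob \<Longrightarrow> X \<noteq> [] \<Longrightarrow> F \<in> Mor \<Longrightarrow>
     cc_cod F = cc_ft X \<Longrightarrow> cc_q eta bind rho F X \<in> Mor"
  unfolding csubsystem_def by blast

lemma csubsystem_s_closed:
  "csubsystem Rs eta bind LMs rho Ob Mor \<Longrightarrow> X \<in> Ob \<Longrightarrow> X \<noteq> [] \<Longrightarrow> F \<in> Mor \<Longrightarrow>
     cc_cod F = X \<Longrightarrow> cc_s eta bind rho F \<in> Mor"
  unfolding csubsystem_def by blast

theorem lemma4p3:
  fixes Rs :: "nat \<Rightarrow> 'r set" and eta :: "nat \<Rightarrow> nat \<Rightarrow> 'r"
    and bind :: "nat \<Rightarrow> nat \<Rightarrow> (nat \<Rightarrow> 'r) \<Rightarrow> 'r \<Rightarrow> 'r"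
    and LMs :: "nat \<Rightarrow> 'l set" and rho :: "nat \<Rightarrow> nat \<Rightarrow> (nat \<Rightarrow> 'r) \<Rightarrow> 'l \<Rightarrow> 'l"
    and Ob :: "'l list set" and Mor :: "('l, 'r) ccmor set"
    and E T :: "'l list" and f :: "'r list"
  assumes "rmonad Rs eta bind"
    and "lmodule Rs eta bind LMs rho"
    and "csubsystem Rs eta bind LMs rho Ob Mor"
    and "E \<in> Ob" and "T \<in> Ob" and "length T \<ge> 1"
    and "length f = length T" and "\<forall>j<length f. f ! j \<in> Rs (length E)"
  shows "f \<in> cc_Hom Mor E T \<longleftrightarrow>
           butlast f \<in> cc_Hom Mor E (butlast T) \<and>
           tilde_elt eta E (rho (length T - 1) (length E) (lfun (butlast f)) (last T)) (last f)
             \<in> cc_Obtilde eta bind Mor"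
proof -
  define S where "S = tilde_elt eta E (rho (length T - 1) (length E) (lfun (butlast f)) (last T)) (last f)"
  have T: "T \<noteq> []" and "f \<noteq> []"
    using assms(6,7) by auto
  then have f: "f = butlast f @ [last f]"
    by simp
  have last_in: "last f \<in> Rs (length E)"
    using assms(8) \<open>f \<noteq> []\<close> by (simp add: last_conv_nth)
  have butlast_in: "\<forall>x\<in>set (butlast f). x \<in> Rs (length E)"
    using assms(8) by (auto simp: in_set_conv_nth dest!: in_set_butlastD)
  have "(E, T, f) \<in> Mor \<longleftrightarrow> (E, butlast T, butlast f) \<in> Mor \<and> S \<in> Mor"
  proof
    assume F: "(E, T, f) \<in> Mor"
    have "cc_comp bind (E, T, f) (cc_p eta T) \<in> Mor"
      using csubsystem_comp_closed[OF assms(3) F csubsystem_p_closed[OF assms(3,5) T]]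
      by (simp add: cc_cod_def cc_dom_def cc_p_def)
    then have "(E, butlast T, butlast f) \<in> Mor"
      by (simp only: cc_comp_cc_p[OF assms(1,7,8)])
    moreover have "S \<in> Mor"
      using csubsystem_s_closed[OF assms(3,5) T F] cc_s_eq_tilde_elt[OF assms(1,7,8)]
      by (simp add: S_def cc_cod_def)
    ultimately show "(E, butlast T, butlast f) \<in> Mor \<and> S \<in> Mor" ..
  next
    assume "(E, butlast T, butlast f) \<in> Mor \<and> S \<in> Mor"
    then have F': "(E, butlast T, butlast f) \<in> Mor" and S: "S \<in> Mor"
      by simp_all
    let ?Q = "cc_q eta bind rho (E, butlast T, butlast f) T"
    have "?Q \<in> Mor"
      using csubsystem_q_closed[OF assms(3,5) T F'] by (simp add: cc_cod_def cc_ft_def)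
    moreover have "cc_cod S = cc_dom ?Q"
      by (simp add: S_def cc_cod_def cc_dom_def cc_q_def cc_pb_def tilde_elt_def)
    ultimately have "cc_comp bind S ?Q \<in> Mor"
      using csubsystem_comp_closed[OF assms(3) S] by blast
    then show "(E, T, f) \<in> Mor"
      using tilde_elt_comp_cc_q[OF assms(1) butlast_in last_in] f by (simp add: S_def)
  qed
  then show ?thesis
    using tilde_elt_in_cc_Obtilde_iff[OF assms(1) last_in] by (simp add: S_def cc_Hom_def)
qed

end
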